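(* Let $\mathcal{A}\subseteq\mathbb{R}^3$ and let $\varphi_1,\ldots,\varphi_N\in L^2(\mathcal{A})$ be pairwise non-parallel with correlation matrix $\boldsymbol{\Psi}=\int_{\mathcal{A}}\boldsymbol{\varphi}^{\mathsf{H}}(\mathbf{r})\boldsymbol{\varphi}(\mathbf{r})\,\mathrm{d}\mathbf{r}\in\mathbb{C}^{N\times N}$ positive definite, where $\boldsymbol{\varphi}(\mathbf{r})=[\varphi_1(\mathbf{r}),\ldots,\varphi_N(\mathbf{r})]$. Let $\boldsymbol{\Psi}=\mathbf{U}\boldsymbol{\Lambda}\mathbf{U}^{\mathsf{H}}$ be an eigendecomposition with $\mathbf{U}$ unitary and $\boldsymbol{\Lambda}=\mathrm{diag}(\lambda_1,\ldots,\lambda_N)$, $\lambda_n>0$. For a Hermitian $\mathbf{M}\in\mathbb{C}^{N\times N}$ define the operator $T_{\mathbf{M}}$ on $L^2(\mathcal{A})$ with kernel $\delta(\mathbf{r}-\mathbf{r}')-\boldsymbol{\varphi}(\mathbf{r})\mathbf{M}\boldsymbol{\varphi}^{\mathsf{H}}(\mathbf{r}')$, i.e. $(T_{\mathbf{M}}f)(\mathbf{r})=f(\mathbf{r})-\boldsymbol{\varphi}(\mathbf{r})\mathbf{M}\int_{\mathcal{A}}\boldsymbol{\varphi}^{\mathsf{H}}(\mathbf{r}')f(\mathbf{r}')\,\mathrm{d}\mathbf{r}'$. Let $C_\varphi=T_{-\mathbf{I}_N}$ (kernel $\delta(\mathbf{r}-\mathbf{r}')+\boldsymbol{\varphi}(\mathbf{r})\boldsymbol{\varphi}^{\mathsf{H}}(\mathbf{r}')$)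 and $\overline{B}_\varphi=T_{\overline{\mathbf{B}}_{\boldsymbol\Psi}}$ with $\overline{\mathbf{B}}_{\boldsymbol\Psi}=\mathbf{U}\,\mathrm{diag}(\overline{\lambda}_1,\ldots,\overline{\lambda}_N)\mathbf{U}^{\mathsf{H}}$, $\overline{\lambda}_n=\frac{1+\sqrt{1+\lambda_n}}{\lambda_n\sqrt{1+\lambda_n}}$. Then $\overline{B}_\varphi C_\varphi\overline{B}_\varphi$ is the identity operator, i.e. in kernel form $\iint_{\mathcal{A}^2}\overline{B}_\varphi(\mathbf{r}_1,\mathbf{r})C_\varphi(\mathbf{r},\mathbf{r}')\overline{B}_\varphi(\mathbf{r}',\mathbf{r}_2)\,\mathrm{d}\mathbf{r}'\mathrm{d}\mathbf{r}=\delta(\mathbf{r}_1-\mathbf{r}_2)$.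
   Context: Kernels containing $\delta(\mathbf{r}-\mathbf{r}')$ denote the identity plus a finite-rank integral operator; kernel identities with $\delta$ on the right mean operator identities equal to the identity. *)

theory Defs
  imports "HOL-Analysis.Analysis" "Jordan_Normal_Form.Schur_Decomposition"
begin

type_synonym R3 = "real \<times> real \<times> real"

definition sq_integrable :: "R3 set \<Rightarrow> (R3 \<Rightarrow> complex) \<Rightarrow> bool" where
  "sq_integrable A f \<longleftrightarrow> f \<in> borel_measurable (lebesgue_on A)
      \<and> integrable (lebesgue_on A) (\<lambda>r. (cmod (f r))^2)"

definition parallel_L2 :: "R3 set \<Rightarrow> (R3 \<Rightarrow> complex) \<Rightarrow> (R3 \<Rightarrow> complex) \<Rightarrow> bool" where
  "parallel_L2 A f g \<longleftrightarrow>
     (\<exists>c::complex. AE r in lebesgue_on A. f r = c * g r) \<or>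
     (\<exists>c::complex. AE r in lebesgue_on A. g r = c * f r)"

definition hermitian_mat :: "complex mat \<Rightarrow> bool" where
  "hermitian_mat M \<longleftrightarrow> M \<in> carrier_mat (dim_row M) (dim_row M) \<and> mat_adjoint M = M"

definition unitary_mat :: "nat \<Rightarrow> complex mat \<Rightarrow> bool" where
  "unitary_mat N U \<longleftrightarrow> U \<in> carrier_mat N N \<and>
     U * mat_adjoint U = 1\<^sub>m N \<and> mat_adjoint U * U = 1\<^sub>m N"

definition pos_def_mat :: "nat \<Rightarrow> complex mat \<Rightarrow> bool" where
  "pos_def_mat N M \<longleftrightarrow> M \<in> carrier_mat N N \<and> hermitian_mat M \<and>
     (\<forall>v \<in> carrier_vec N. v \<noteq> 0\<^sub>v N \<longrightarrow> 0 < Re (conjugate v \<bullet> (M *\<^sub>v v)))"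

definition corr_mat :: "nat \<Rightarrow> R3 set \<Rightarrow> (nat \<Rightarrow> R3 \<Rightarrow> complex) \<Rightarrow> complex mat" where
  "corr_mat N A \<phi> = mat N N (\<lambda>(m,n). integral\<^sup>L (lebesgue_on A) (\<lambda>r. cnj (\<phi> m r) * \<phi> n r))"

definition T_op :: "nat \<Rightarrow> R3 set \<Rightarrow> (nat \<Rightarrow> R3 \<Rightarrow> complex) \<Rightarrow> complex mat
      \<Rightarrow> (R3 \<Rightarrow> complex) \<Rightarrow> (R3 \<Rightarrow> complex)" where
  "T_op N A \<phi> M f = (\<lambda>r. f r - (\<Sum>m<N. \<Sum>n<N. \<phi> m r * M $$ (m,n) *
       integral\<^sup>L (lebesgue_on A) (\<lambda>r'. cnj (\<phi> n r') * f r')))"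

definition lambda_bar :: "real \<Rightarrow> real" where
  "lambda_bar l = (1 + sqrt (1 + l)) / (l * sqrt (1 + l))"

end

theory Submission
  imports Defs
begin

text \<open>
  With the coefficient vector \<open>c(f) = \<integral>\<^sub>A \<phi>\<^sup>H f\<close> one has \<open>T\<^sub>M f = f - \<phi> M c(f)\<close> and
  \<open>c(T\<^sub>K f) = c(f) - \<Psi> K c(f)\<close>, so the operators compose by the matrix rule
  \<open>T\<^sub>M T\<^sub>K = T\<^bsub>K + M - M \<Psi> K\<^esub>\<close>. All matrices involved are of the form \<open>U diag(d) U\<^sup>H\<close>,
  so \<open>B C B\<close> is \<open>T\<^sub>X\<close> with \<open>X\<close> diagonal in the same basis, and on an eigenvalue \<open>\<lambda>\<close> with
  \<open>b = lambda_bar \<lambda>\<close> the entry \<open>x\<close> of \<open>X\<close> satisfies \<open>\<lambda> x = 1 - (1 - \<lambda> b)\<^sup>2 (1 + \<lambda>)\<close>.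
  The choice of \<open>b\<close> makes \<open>1 - \<lambda> b = -1 / sqrt (1 + \<lambda>)\<close>, hence \<open>x = 0\<close> and \<open>X = 0\<close>.
\<close>

unbundle no vec_syntax and no inner_syntax

lemma integrable_cnj_mult:
  assumes "sq_integrable A f" "sq_integrable A g"
  shows "integrable (lebesgue_on A) (\<lambda>r. cnj (f r) * g r)"
proof (rule Bochner_Integration.integrable_bound)
  have f: "f \<in> borel_measurable (lebesgue_on A)" and g: "g \<in> borel_measurable (lebesgue_on A)"
    using assms unfolding sq_integrable_def by auto
  show "integrable (lebesgue_on A) (\<lambda>r. (cmod (f r))\<^sup>2 + (cmod (g r))\<^sup>2)"
    using assms unfolding sq_integrable_def by auto
  have "(\<lambda>r. cnj (f r)) \<in> borel_measurable (lebesgue_on A)"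
    using measurable_compose[OF f borel_measurable_continuous_onI[OF continuous_on_cnj[OF continuous_on_id]]]
    by simp
  then show "(\<lambda>r. cnj (f r) * g r) \<in> borel_measurable (lebesgue_on A)"
    using g by (rule borel_measurable_times)
  show "AE r in lebesgue_on A. norm (cnj (f r) * g r) \<le> norm ((cmod (f r))\<^sup>2 + (cmod (g r))\<^sup>2)"
  proof (rule AE_I2)
    fix r
    have "2 * cmod (f r) * cmod (g r) \<le> (cmod (f r))\<^sup>2 + (cmod (g r))\<^sup>2"
      by (rule sum_squares_bound)
    moreover have "0 \<le> cmod (f r) * cmod (g r)"
      by simp
    ultimately have "cmod (f r) * cmod (g r) \<le> (cmod (f r))\<^sup>2 + (cmod (g r))\<^sup>2"
      by linarith
    then show "norm (cnj (f r) * g r) \<le> norm ((cmod (f r))\<^sup>2 + (cmod (g r))\<^sup>2)"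
      by (simp add: norm_mult)
  qed
qed

definition coeff_vec :: "nat \<Rightarrow> R3 set \<Rightarrow> (nat \<Rightarrow> R3 \<Rightarrow> complex) \<Rightarrow> (R3 \<Rightarrow> complex) \<Rightarrow> complex vec" where
  "coeff_vec N A \<phi> f = vec N (\<lambda>n. integral\<^sup>L (lebesgue_on A) (\<lambda>r. cnj (\<phi> n r) * f r))"

definition phi_vec :: "nat \<Rightarrow> (nat \<Rightarrow> R3 \<Rightarrow> complex) \<Rightarrow> R3 \<Rightarrow> complex vec" where
  "phi_vec N \<phi> r = vec N (\<lambda>m. \<phi> m r)"

lemma corr_mat_carrier: "corr_mat N A \<phi> \<in> carrier_mat N N"
  unfolding corr_mat_def by simp

lemma coeff_vec_carrier [simp]: "coeff_vec N A \<phi> f \<in> carrier_vec N"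
  and phi_vec_carrier [simp]: "phi_vec N \<phi> r \<in> carrier_vec N"
  unfolding coeff_vec_def phi_vec_def by simp_all

lemma T_op_eq_scalar_prod:
  assumes "M \<in> carrier_mat N N"
  shows "T_op N A \<phi> M f r = f r - phi_vec N \<phi> r \<bullet> (M *\<^sub>v coeff_vec N A \<phi> f)"
  using assms
  by (simp add: T_op_def phi_vec_def coeff_vec_def scalar_prod_def mult_mat_vec_def
      sum_distrib_left atLeast0LessThan mult.assoc)

lemma T_op_zero: "T_op N A \<phi> (0\<^sub>m N N) f = f"
  unfolding T_op_def by simp

lemma coeff_vec_T_op:
  assumes L2: "\<And>n. n < N \<Longrightarrow> sq_integrable A (\<phi> n)" and f: "sq_integrable A f"
    and M: "M \<in> carrier_mat N N"
  shows "coeff_vec N A \<phi> (T_op N A \<phi> M f)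
    = coeff_vec N A \<phi> f - corr_mat N A \<phi> *\<^sub>v (M *\<^sub>v coeff_vec N A \<phi> f)"
proof (rule eq_vecI)
  define d where "d = M *\<^sub>v coeff_vec N A \<phi> f"
  have d: "d \<in> carrier_vec N"
    unfolding d_def using M coeff_vec_carrier by (rule mult_mat_vec_carrier)
  fix n assume "n < dim_vec (coeff_vec N A \<phi> f - corr_mat N A \<phi> *\<^sub>v d)"
  then have n: "n < N" by (simp add: coeff_vec_def corr_mat_def)
  have int_\<phi>: "integrable (lebesgue_on A) (\<lambda>r. cnj (\<phi> n r) * \<phi> m r)" if "m < N" for m
    using integrable_cnj_mult[OF L2 L2] n that .
  have int_f: "integrable (lebesgue_on A) (\<lambda>r. cnj (\<phi> n r) * f r)"
    using integrable_cnj_mult[OF L2 f] n by blast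
  have T: "T_op N A \<phi> M f r = f r - (\<Sum>m<N. \<phi> m r * d $ m)" for r
    using M unfolding d_def by (simp add: T_op_eq_scalar_prod phi_vec_def scalar_prod_def atLeast0LessThan)
  have "coeff_vec N A \<phi> (T_op N A \<phi> M f) $ n
      = integral\<^sup>L (lebesgue_on A) (\<lambda>r. cnj (\<phi> n r) * f r - (\<Sum>m<N. cnj (\<phi> n r) * \<phi> m r * d $ m))"
    using n by (simp add: coeff_vec_def T right_diff_distrib sum_distrib_left mult.assoc)
  also have "\<dots> = integral\<^sup>L (lebesgue_on A) (\<lambda>r. cnj (\<phi> n r) * f r)
      - (\<Sum>m<N. integral\<^sup>L (lebesgue_on A) (\<lambda>r. cnj (\<phi> n r) * \<phi> m r) * d $ m)"
  proof -
    have int_sum: "integrable (lebesgue_on A) (\<lambda>r. \<Sum>m<N. cnj (\<phi> n r) * \<phi> m r * d $ m)"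
      using int_\<phi> by (intro Bochner_Integration.integrable_sum integrable_mult_left) auto
    show ?thesis
      using int_\<phi>
      by (simp add: Bochner_Integration.integral_diff[OF int_f int_sum] Bochner_Integration.integral_sum)
  qed
  also have "\<dots> = (coeff_vec N A \<phi> f - corr_mat N A \<phi> *\<^sub>v d) $ n"
    using n d by (simp add: coeff_vec_def corr_mat_def scalar_prod_def atLeast0LessThan)
  finally show "coeff_vec N A \<phi> (T_op N A \<phi> M f) $ n = (coeff_vec N A \<phi> f - corr_mat N A \<phi> *\<^sub>v d) $ n" .
qed (simp add: coeff_vec_def corr_mat_def)

definition T_comp_mat :: "complex mat \<Rightarrow> complex mat \<Rightarrow> complex mat \<Rightarrow> complex mat" where
  "T_comp_mat \<Psi> M K = K + M - M * \<Psi> * K"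

lemma T_comp_mat_carrier:
  "\<Psi> \<in> carrier_mat N N \<Longrightarrow> M \<in> carrier_mat N N \<Longrightarrow> K \<in> carrier_mat N N \<Longrightarrow>
    T_comp_mat \<Psi> M K \<in> carrier_mat N N"
  unfolding T_comp_mat_def by (meson add_carrier_mat minus_carrier_mat mult_carrier_mat)

lemma T_comp_mat_mult_vec:
  assumes \<Psi>: "\<Psi> \<in> carrier_mat N N" and M: "M \<in> carrier_mat N N" and K: "K \<in> carrier_mat N N"
    and c: "c \<in> carrier_vec N"
  shows "T_comp_mat \<Psi> M K *\<^sub>v c = K *\<^sub>v c + M *\<^sub>v (c - \<Psi> *\<^sub>v (K *\<^sub>v c))"
proof -
  have \<Psi>Kc: "\<Psi> *\<^sub>v (K *\<^sub>v c) \<in> carrier_vec N"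
    using \<Psi> K c by simp
  have "(M * \<Psi> * K) *\<^sub>v c = M *\<^sub>v (\<Psi> *\<^sub>v (K *\<^sub>v c))"
    unfolding assoc_mult_mat_vec[OF mult_carrier_mat[OF M \<Psi>] K c]
    by (rule assoc_mult_mat_vec[OF M \<Psi> mult_mat_vec_carrier[OF K c]])
  then show ?thesis
    unfolding T_comp_mat_def mult_minus_distrib_mat_vec[OF M c \<Psi>Kc]
    using M K \<Psi> c
    by (simp add: minus_mult_distrib_mat_vec[of _ N N] add_mult_distrib_mat_vec[of _ N N])
      (rule eq_vecI; simp)
qed

lemma T_op_T_op:
  assumes L2: "\<And>n. n < N \<Longrightarrow> sq_integrable A (\<phi> n)" and f: "sq_integrable A f"
    and M: "M \<in> carrier_mat N N" and K: "K \<in> carrier_mat N N"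
  shows "T_op N A \<phi> M (T_op N A \<phi> K f) = T_op N A \<phi> (T_comp_mat (corr_mat N A \<phi>) M K) f"
proof
  fix r
  define \<Psi> c v where "\<Psi> = corr_mat N A \<phi>" and "c = coeff_vec N A \<phi> f" and "v = phi_vec N \<phi> r"
  have \<Psi>: "\<Psi> \<in> carrier_mat N N" and c: "c \<in> carrier_vec N" and v: "v \<in> carrier_vec N"
    unfolding \<Psi>_def c_def v_def by (simp_all add: corr_mat_carrier)
  have cT: "coeff_vec N A \<phi> (T_op N A \<phi> K f) = c - \<Psi> *\<^sub>v (K *\<^sub>v c)"
    unfolding c_def \<Psi>_def by (rule coeff_vec_T_op[OF L2 f K])
  have TK: "T_op N A \<phi> K f r = f r - v \<bullet> (K *\<^sub>v c)"
    unfolding c_def v_def by (rule T_op_eq_scalar_prod[OF K])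
  have "T_op N A \<phi> M (T_op N A \<phi> K f) r
      = T_op N A \<phi> K f r - v \<bullet> (M *\<^sub>v coeff_vec N A \<phi> (T_op N A \<phi> K f))"
    unfolding v_def by (rule T_op_eq_scalar_prod[OF M])
  also have "\<dots> = f r - (v \<bullet> (K *\<^sub>v c) + v \<bullet> (M *\<^sub>v (c - \<Psi> *\<^sub>v (K *\<^sub>v c))))"
    by (simp only: cT TK diff_diff_eq)
  also have "\<dots> = f r - v \<bullet> (T_comp_mat \<Psi> M K *\<^sub>v c)"
    unfolding T_comp_mat_mult_vec[OF \<Psi> M K c] using M K \<Psi> c
    by (simp add: scalar_prod_add_distrib[OF v])
  also have "\<dots> = T_op N A \<phi> (T_comp_mat \<Psi> M K) f r"
    unfolding c_def v_def by (rule T_op_eq_scalar_prod[symmetric, OF T_comp_mat_carrier[OF \<Psi> M K]])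
  finally show "T_op N A \<phi> M (T_op N A \<phi> K f) r = T_op N A \<phi> (T_comp_mat (corr_mat N A \<phi>) M K) f r"
    unfolding \<Psi>_def .
qed

lemma lambda_bar_multiplier:
  fixes l :: real
  assumes l: "l > 0"
  shows "(1 - l * lambda_bar l)\<^sup>2 * (1 + l) = 1"
proof -
  define s where "s = sqrt (1 + l)"
  have s: "s > 0" and s2: "s\<^sup>2 = 1 + l"
    unfolding s_def using l by simp_all
  have "1 - l * lambda_bar l = - 1 / s"
    using l s unfolding lambda_bar_def s_def[symmetric] by (simp add: field_simps)
  then show ?thesis
    using s by (simp add: s2[symmetric] power_divide)
qed

lemma lambda_bar_sandwich:
  fixes l :: real and b k :: complex
  assumes l: "l > 0" and b: "b = of_real (lambda_bar l)" and k: "k = b + - 1 - (- 1) * of_real l * b"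
  shows "k + b - b * of_real l * k = 0"
proof -
  have "of_real l * (k + b - b * of_real l * k) = 1 - (1 - of_real l * b)\<^sup>2 * (1 + of_real l)"
    unfolding k by (simp add: algebra_simps power2_eq_square)
  also have "(1 - of_real l * b)\<^sup>2 * (1 + of_real l) = complex_of_real ((1 - l * lambda_bar l)\<^sup>2 * (1 + l))"
    unfolding b by simp
  finally show ?thesis
    using l by (simp add: lambda_bar_multiplier)
qed

lemma adjoint_carrier_mat: "A \<in> carrier_mat n m \<Longrightarrow> mat_adjoint A \<in> carrier_mat m n"
  unfolding mat_adjoint_def by auto

definition spectral_mat :: "nat \<Rightarrow> complex mat \<Rightarrow> (nat \<Rightarrow> complex) \<Rightarrow> complex mat" where
  "spectral_mat N U d = U * mat_diag N d * mat_adjoint U"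

context
  fixes N :: nat and U :: "complex mat"
  assumes U: "unitary_mat N U"
begin

lemma unitary_carrier: "U \<in> carrier_mat N N" and adjoint_unitary_carrier: "mat_adjoint U \<in> carrier_mat N N"
  using U adjoint_carrier_mat unfolding unitary_mat_def by auto

lemma spectral_mat_carrier: "spectral_mat N U d \<in> carrier_mat N N"
  unfolding spectral_mat_def using unitary_carrier adjoint_unitary_carrier by auto

lemma spectral_mat_dims [simp]: "dim_row (spectral_mat N U d) = N" "dim_col (spectral_mat N U d) = N"
  using spectral_mat_carrier by auto

lemma spectral_mat_index:
  assumes "i < N" "j < N"
  shows "spectral_mat N U d $$ (i, j) = (\<Sum>k<N. U $$ (i, k) * d k * mat_adjoint U $$ (k, j))"
  unfolding spectral_mat_def using assms unitary_carrier adjoint_unitary_carrier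
  by (simp add: mat_diag_mult_right[of U N N] scalar_prod_def atLeast0LessThan del: assoc_mult_mat)

lemma spectral_mat_add: "spectral_mat N U d + spectral_mat N U e = spectral_mat N U (\<lambda>i. d i + e i)"
  by (rule eq_matI) (auto simp: spectral_mat_index algebra_simps sum.distrib)

lemma spectral_mat_diff: "spectral_mat N U d - spectral_mat N U e = spectral_mat N U (\<lambda>i. d i - e i)"
  by (rule eq_matI) (auto simp: spectral_mat_index algebra_simps sum_subtractf)

lemma spectral_mat_uminus: "- spectral_mat N U d = spectral_mat N U (\<lambda>i. - d i)"
  by (rule eq_matI) (auto simp: spectral_mat_index sum_negf)

lemma spectral_mat_zero: "(\<And>i. i < N \<Longrightarrow> d i = 0) \<Longrightarrow> spectral_mat N U d = 0\<^sub>m N N"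
  by (rule eq_matI) (auto simp: spectral_mat_index)

lemma one_eq_spectral_mat: "1\<^sub>m N = spectral_mat N U (\<lambda>i. 1)"
  using U unitary_carrier unfolding spectral_mat_def unitary_mat_def by simp

lemma adjoint_mult_unitary_mult: "X \<in> carrier_mat N n \<Longrightarrow> mat_adjoint U * (U * X) = X"
  using U assoc_mult_mat[OF adjoint_unitary_carrier unitary_carrier, of X n, symmetric]
  unfolding unitary_mat_def by simp

lemma spectral_mat_mult: "spectral_mat N U d * spectral_mat N U e = spectral_mat N U (\<lambda>i. d i * e i)"
proof -
  note Uc = unitary_carrier and Uhc = adjoint_unitary_carrier
  have spectral_mat_assoc: "spectral_mat N U f = U * (mat_diag N f * mat_adjoint U)" for f
    unfolding spectral_mat_def by (rule assoc_mult_mat[OF Uc mat_diag_dim Uhc])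
  have DUh: "mat_diag N d * mat_adjoint U \<in> carrier_mat N N"
    and EUh: "mat_diag N e * mat_adjoint U \<in> carrier_mat N N"
    by (rule mult_carrier_mat[OF mat_diag_dim Uhc])+
  have "spectral_mat N U d * spectral_mat N U e
      = U * (mat_diag N d * mat_adjoint U * (U * (mat_diag N e * mat_adjoint U)))"
    unfolding spectral_mat_assoc by (rule assoc_mult_mat[OF Uc DUh mult_carrier_mat[OF Uc EUh]])
  also have "mat_diag N d * mat_adjoint U * (U * (mat_diag N e * mat_adjoint U))
      = mat_diag N d * (mat_diag N e * mat_adjoint U)"
    using assoc_mult_mat[OF mat_diag_dim Uhc mult_carrier_mat[OF Uc EUh]]
    by (simp add: adjoint_mult_unitary_mult[OF EUh])
  also have "\<dots> = mat_diag N (\<lambda>i. d i * e i) * mat_adjoint U"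
    unfolding mat_diag_diag[symmetric]
    by (rule assoc_mult_mat[symmetric, OF mat_diag_dim mat_diag_dim Uhc])
  finally show ?thesis
    unfolding spectral_mat_assoc .
qed

lemma T_comp_mat_spectral_mat:
  "T_comp_mat (spectral_mat N U l) (spectral_mat N U m) (spectral_mat N U k)
    = spectral_mat N U (\<lambda>i. k i + m i - m i * l i * k i)"
  unfolding T_comp_mat_def spectral_mat_mult spectral_mat_add spectral_mat_diff ..

lemma T_comp_mat_lambda_bar:
  assumes lam_pos: "\<And>n. n < N \<Longrightarrow> lam n > 0"
  defines "\<Psi> \<equiv> spectral_mat N U (\<lambda>n. complex_of_real (lam n))"
    and "B \<equiv> spectral_mat N U (\<lambda>n. complex_of_real (lambda_bar (lam n)))"
  shows "T_comp_mat \<Psi> B (T_comp_mat \<Psi> (- 1\<^sub>m N) B) = 0\<^sub>m N N"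
  unfolding \<Psi>_def B_def one_eq_spectral_mat spectral_mat_uminus T_comp_mat_spectral_mat
  by (rule spectral_mat_zero) (rule lambda_bar_sandwich[OF lam_pos refl refl])

end

theorem lemma6:
  fixes N :: nat and A :: "R3 set" and \<phi> :: "nat \<Rightarrow> R3 \<Rightarrow> complex"
    and U :: "complex mat" and lam :: "nat \<Rightarrow> real"
  assumes A_meas: "A \<in> sets lebesgue"
    and L2: "\<And>n. n < N \<Longrightarrow> sq_integrable A (\<phi> n)"
    and nonpar: "\<And>i j. i < N \<Longrightarrow> j < N \<Longrightarrow> i \<noteq> j \<Longrightarrow> \<not> parallel_L2 A (\<phi> i) (\<phi> j)"
    and posdef: "pos_def_mat N (corr_mat N A \<phi>)"
    and U_unitary: "unitary_mat N U"
    and lam_pos: "\<And>n. n < N \<Longrightarrow> lam n > 0"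
    and eig: "corr_mat N A \<phi> = U * mat_diag N (\<lambda>n. complex_of_real (lam n)) * mat_adjoint U"
  shows "\<forall>f. sq_integrable A f \<longrightarrow>
    (\<forall>r\<in>A.
      (let Bbar = U * mat_diag N (\<lambda>n. complex_of_real (lambda_bar (lam n))) * mat_adjoint U
       in T_op N A \<phi> Bbar (T_op N A \<phi> (- 1\<^sub>m N) (T_op N A \<phi> Bbar f)) r) = f r)"
proof (intro allI impI ballI)
  fix f r assume f: "sq_integrable A f"
  define B where "B = spectral_mat N U (\<lambda>n. complex_of_real (lambda_bar (lam n)))"
  have B: "B \<in> carrier_mat N N" and minus_one: "- 1\<^sub>m N \<in> carrier_mat N N"
    unfolding B_def using spectral_mat_carrier[OF U_unitary] by simp_all
  have \<Psi>: "corr_mat N A \<phi> = spectral_mat N U (\<lambda>n. complex_of_real (lam n))"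
    unfolding eig spectral_mat_def ..
  have "T_op N A \<phi> B (T_op N A \<phi> (- 1\<^sub>m N) (T_op N A \<phi> B f))
      = T_op N A \<phi> B (T_op N A \<phi> (T_comp_mat (corr_mat N A \<phi>) (- 1\<^sub>m N) B) f)"
    by (rule arg_cong[OF T_op_T_op[OF L2 f minus_one B]])
  also have "\<dots> = T_op N A \<phi> (T_comp_mat (corr_mat N A \<phi>) B (T_comp_mat (corr_mat N A \<phi>) (- 1\<^sub>m N) B)) f"
    by (rule T_op_T_op[OF L2 f B T_comp_mat_carrier[OF corr_mat_carrier minus_one B]])
  also have "T_comp_mat (corr_mat N A \<phi>) B (T_comp_mat (corr_mat N A \<phi>) (- 1\<^sub>m N) B) = 0\<^sub>m N N"
    unfolding \<Psi> B_def by (rule T_comp_mat_lambda_bar[OF U_unitary lam_pos])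
  finally show "(let Bbar = U * mat_diag N (\<lambda>n. complex_of_real (lambda_bar (lam n))) * mat_adjoint U
       in T_op N A \<phi> Bbar (T_op N A \<phi> (- 1\<^sub>m N) (T_op N A \<phi> Bbar f)) r) = f r"
    unfolding T_op_zero B_def spectral_mat_def Let_def by simp
qed

end
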